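(* Assume $n\ge1$. Let $\bar x^k,\bar s^k\in\mathbb{R}^{n+1}_{++}$ satisfy $\|\bar x^k\odot\bar s^k-\bar\mu^k e\|\le\beta\bar\mu^k$, where $\bar\mu^k=(\bar x^k)^\top\bar s^k/(n+1)$ and $0<\beta<\sqrt2-1$. Let $\eta=\beta/\sqrt{n+1}$, $\gamma=1-\eta$, let $(d_{\bar x},d_{\bar s})$ solve the Newton system (N) at $(\bar x^k,\bar s^k)$ with these parameters, and set $\bar x^+=\bar x^k+d_{\bar x}$ (which is componentwise positive) and $\bar s^+=\psi(\bar x^+)+\gamma\bar r^k$, where $\bar r^k=\bar s^k-\psi(\bar x^k)$. Then, with $\bar\mu^+=(\bar x^+)^\top\bar s^+/(n+1)$, $$\|\bar x^+\odot\bar s^+-\bar\mu^+e\|\le\beta\bar\mu^+,$$ and $\bar s^+>0$ (componentwise).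
   Context: Let $Q\in\mathbb{R}^{n_z\times n_z}$ be symmetric positive semidefinite, $c\in\mathbb{R}^{n_z}$, $A\in\mathbb{R}^{n_b\times n_z}$, $b\in\mathbb{R}^{n_b}$, and $n=n_z+n_b$. Define $M=\begin{bmatrix}Q&-A^\top\\ A&0\end{bmatrix}$ and $q=\begin{bmatrix}c\\-b\end{bmatrix}$. For $\bar x=(x,\tau)\in\mathbb{R}^{n+1}_{++}$ define $\psi(\bar x)=\begin{bmatrix} Mx+q\tau\\ -x^\top Mx/\tau-x^\top q\end{bmatrix}$ and its Jacobian $\nabla\psi(\bar x)=\begin{bmatrix} M & q\\ -x^\top(M+M^\top)/\tau-q^\top & x^\top Mx/\tau^2\end{bmatrix}$. $\odot$ is the componentwise product, $e$ the all-ones vector, $\|\cdot\|$ the Euclidean norm. Newton system (N): given $\bar x^k,\bar s^k\in\mathbb{R}^{n+1}_{++}$ and $\eta,\gamma\in(0,1)$, let $\bar r^k=\bar s^k-\psi(\bar x^k)$ and $\bar\mu^k=(\bar x^k)^\top\bar s^k/(n+1)$; $(d_{\bar x},d_{\bar s})$ solves (N) if $d_{\bar s}-\nabla\psi(\bar x^k)d_{\bar x}=-\eta\bar r^k$ and $\bar x^k\odot d_{\bar s}+\bar s^k\odot d_{\bar x}=\gamma\bar\mu^k e-\bar x^k\odot\bar s^k$. *)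

theory Defs
  imports Complex_Main
begin

text \<open>Vectors in R^m are represented as functions nat => real, only indices < m matter;
  matrices as nat => nat => real. Vectors in R^(n+1) use indices 0..n, the last index n
  being the homogenising coordinate tau.\<close>

definition dotp :: "nat \<Rightarrow> (nat \<Rightarrow> real) \<Rightarrow> (nat \<Rightarrow> real) \<Rightarrow> real" where
  "dotp m x y = (\<Sum>i<m. x i * y i)"

definition matvec :: "nat \<Rightarrow> (nat \<Rightarrow> nat \<Rightarrow> real) \<Rightarrow> (nat \<Rightarrow> real) \<Rightarrow> (nat \<Rightarrow> real)" where
  "matvec m B x = (\<lambda>i. \<Sum>j<m. B i j * x j)"

text \<open>M = [[Q, -A^T],[A, 0]] of size n x n with n = nz + nb.\<close>
definition Mmat :: "nat \<Rightarrow> (nat \<Rightarrow> nat \<Rightarrow> real) \<Rightarrow> (nat \<Rightarrow> nat \<Rightarrow> real) \<Rightarrow> (nat \<Rightarrow> nat \<Rightarrow> real)" where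
  "Mmat nz Q A = (\<lambda>i j.
     if i < nz \<and> j < nz then Q i j
     else if i < nz then - A (j - nz) i
     else if j < nz then A (i - nz) j
     else 0)"

definition qvec :: "nat \<Rightarrow> (nat \<Rightarrow> real) \<Rightarrow> (nat \<Rightarrow> real) \<Rightarrow> (nat \<Rightarrow> real)" where
  "qvec nz c b = (\<lambda>i. if i < nz then c i else - b (i - nz))"

definition psi :: "nat \<Rightarrow> (nat \<Rightarrow> nat \<Rightarrow> real) \<Rightarrow> (nat \<Rightarrow> real) \<Rightarrow> (nat \<Rightarrow> real) \<Rightarrow> (nat \<Rightarrow> real)" where
  "psi n M q xb = (\<lambda>i.
     if i < n then matvec n M xb i + q i * xb n
     else - dotp n xb (matvec n M xb) / xb n - dotp n xb q)"

definition jac :: "nat \<Rightarrow> (nat \<Rightarrow> nat \<Rightarrow> real) \<Rightarrow> (nat \<Rightarrow> real) \<Rightarrow> (nat \<Rightarrow> real) \<Rightarrow> (nat \<Rightarrow> nat \<Rightarrow> real)" where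
  "jac n M q xb = (\<lambda>i j.
     if i < n \<and> j < n then M i j
     else if i < n then q i
     else if j < n then - (\<Sum>l<n. xb l * (M l j + M j l)) / xb n - q j
     else dotp n xb (matvec n M xb) / (xb n)^2)"

definition mubar :: "nat \<Rightarrow> (nat \<Rightarrow> real) \<Rightarrow> (nat \<Rightarrow> real) \<Rightarrow> real" where
  "mubar n x s = dotp (n+1) x s / real (n+1)"

definition centdev :: "nat \<Rightarrow> (nat \<Rightarrow> real) \<Rightarrow> (nat \<Rightarrow> real) \<Rightarrow> real" where
  "centdev n x s = sqrt (\<Sum>i<n+1. (x i * s i - mubar n x s)^2)"

definition newton_sys :: "nat \<Rightarrow> (nat \<Rightarrow> nat \<Rightarrow> real) \<Rightarrow> (nat \<Rightarrow> real) \<Rightarrow> real \<Rightarrow> real \<Rightarrow>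
    (nat \<Rightarrow> real) \<Rightarrow> (nat \<Rightarrow> real) \<Rightarrow> (nat \<Rightarrow> real) \<Rightarrow> (nat \<Rightarrow> real) \<Rightarrow> bool" where
  "newton_sys n M q eta gam x s dx ds \<longleftrightarrow>
     (\<forall>i<n+1. ds i - matvec (n+1) (jac n M q x) dx i = - eta * (s i - psi n M q x i)) \<and>
     (\<forall>i<n+1. x i * ds i + s i * dx i = gam * mubar n x s - x i * s i)"

end

theory Submission
  imports Defs
begin

text \<open>Homogeneity of \<open>\<psi>\<close> gives \<open>x\<^sup>T\<psi>(x) = 0\<close> and \<open>x\<^sup>T\<nabla>\<psi>(x) = -\<psi>(x)\<^sup>T\<close>; together with the
  choice \<open>\<gamma> = 1 - \<eta>\<close> this makes the residual orthogonal to \<open>d\<^sub>x\<close>, so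
  \<open>d\<^sub>x\<^sup>Td\<^sub>s = d\<^sub>x\<^sup>T\<nabla>\<psi>(x)d\<^sub>x = w\<close>, and \<open>w \<ge> 0\<close> because this quadratic form is the quadratic form of
  \<open>M\<close>, i.e. of \<open>Q\<close>, at a shifted vector. As \<open>\<psi>\<close> is affine in its first \<open>n\<close> components and the
  last component has an explicit second-order remainder,
  \<open>x\<^sup>+ \<odot> s\<^sup>+ = \<gamma>\<mu> e + d\<^sub>x \<odot> d\<^sub>s - w e\<^sub>n\<^sub>+\<^sub>1\<close>. Hence \<open>\<mu>\<^sup>+ = \<gamma>\<mu>\<close>, and the classical short-step analysis
  applies: the deviation \<open>d\<^sub>x \<odot> d\<^sub>s - w e\<^sub>n\<^sub>+\<^sub>1\<close> sums to zero and is bounded above componentwise by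
  the AM-GM bound on \<open>d\<^sub>x\<^sub>i d\<^sub>s\<^sub>i\<close>, whose total is at most \<open>\<beta>\<^sup>2\<mu>/(2(1-\<beta>))\<close>; for
  \<open>\<beta> < \<surd>2 - 1\<close> this gives norm at most \<open>\<beta>\<gamma>\<mu>\<close>, and the same estimate keeps \<open>x + d\<^sub>x\<close> positive.\<close>

section \<open>Short-step analysis of a centred Newton direction\<close>

lemma sum_power2_le_power2_sum:
  fixes y :: "'a \<Rightarrow> real"
  assumes "finite I" and "\<And>i. i \<in> I \<Longrightarrow> 0 \<le> y i"
  shows "(\<Sum>i\<in>I. (y i)^2) \<le> (\<Sum>i\<in>I. y i)^2"
proof -
  have "(\<Sum>i\<in>I. (y i)^2) \<le> (\<Sum>i\<in>I. y i * (\<Sum>j\<in>I. y j))"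
  proof (rule sum_mono)
    fix i assume i: "i \<in> I"
    have "y i \<le> (\<Sum>j\<in>I. y j)" using member_le_sum[of i I y] assms i by auto
    then show "(y i)^2 \<le> y i * (\<Sum>j\<in>I. y j)"
      using assms(2)[OF i] by (simp add: power2_eq_square mult_left_mono)
  qed
  also have "\<dots> = (\<Sum>i\<in>I. y i)^2" by (simp add: sum_distrib_right[symmetric] power2_eq_square)
  finally show ?thesis .
qed

lemma sum_power2_le_of_sum_eq_0:
  fixes b c :: "'a \<Rightarrow> real"
  assumes fin: "finite I" and sum_b: "(\<Sum>i\<in>I. b i) = 0"
    and b_le: "\<And>i. i \<in> I \<Longrightarrow> b i \<le> c i" and c_nonneg: "\<And>i. i \<in> I \<Longrightarrow> 0 \<le> c i"
  shows "(\<Sum>i\<in>I. (b i)^2) \<le> 2 * (\<Sum>i\<in>I. c i)^2"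
proof -
  define bp where "bp i = max (b i) 0" for i
  define bn where "bn i = max (- b i) 0" for i
  have b_split: "b i = bp i - bn i" for i unfolding bp_def bn_def by auto
  have b_sq: "(b i)^2 = (bp i)^2 + (bn i)^2" for i
    unfolding bp_def bn_def by (auto simp: max_def power2_eq_square)
  have sum_bn: "(\<Sum>i\<in>I. bn i) = (\<Sum>i\<in>I. bp i)"
    using sum_b by (simp add: b_split sum_subtractf)
  have "(\<Sum>i\<in>I. (b i)^2) = (\<Sum>i\<in>I. (bp i)^2) + (\<Sum>i\<in>I. (bn i)^2)"
    by (simp add: b_sq sum.distrib)
  also have "\<dots> \<le> (\<Sum>i\<in>I. bp i)^2 + (\<Sum>i\<in>I. bn i)^2"
    using fin by (intro add_mono sum_power2_le_power2_sum) (auto simp: bp_def bn_def)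
  also have "\<dots> = 2 * (\<Sum>i\<in>I. bp i)^2" by (simp add: sum_bn)
  also have "\<dots> \<le> 2 * (\<Sum>i\<in>I. c i)^2"
  proof -
    have "(\<Sum>i\<in>I. bp i) \<le> (\<Sum>i\<in>I. c i)"
      using b_le c_nonneg unfolding bp_def by (intro sum_mono) auto
    moreover have "0 \<le> (\<Sum>i\<in>I. bp i)" unfolding bp_def by (intro sum_nonneg) auto
    ultimately show ?thesis by (simp add: power_mono)
  qed
  finally show ?thesis .
qed

lemma sqrt_2_lt_three_halves: "sqrt 2 < (3/2 :: real)"
proof -
  have "sqrt (2::real) < sqrt ((3/2)^2)" by (subst real_sqrt_less_iff) (simp add: power2_eq_square)
  then show ?thesis by simp
qed

lemma small_beta_power2:
  fixes \<beta> :: real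
  assumes "0 < \<beta>" and "\<beta> < sqrt 2 - 1"
  shows "2 * \<beta>^2 < (1 - \<beta>)^2"
proof -
  have "\<beta> * (sqrt 2 + 1) < (sqrt 2 - 1) * (sqrt 2 + 1)"
    using assms by (intro mult_strict_right_mono) auto
  then have "sqrt 2 * \<beta> < 1 - \<beta>" by (simp add: algebra_simps)
  then have "(sqrt 2 * \<beta>)^2 < (1 - \<beta>)^2"
    using assms by (intro power_strict_mono) auto
  then show ?thesis by (simp add: power_mult_distrib)
qed

lemma small_beta_step:
  fixes \<beta> \<eta> :: real
  assumes "0 < \<beta>" and "\<beta> < sqrt 2 - 1" and "\<eta> \<le> \<beta> / sqrt 2"
  shows "\<beta> / (sqrt 2 * (1 - \<beta>)) \<le> 1 - \<eta>"
proof -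
  define r where "r = sqrt (2::real)"
  have r_pos: "0 < r" and r_lt: "r < 3/2"
    unfolding r_def using sqrt_2_lt_three_halves by auto
  have beta_lt_1: "\<beta> < 1" using assms(2) r_lt r_def by simp
  have "\<beta> \<le> (1 - \<beta>) * (r - \<beta>)"
  proof -
    have "0 < (r - 1 - \<beta>) * (3 - \<beta>)" using assms(2) beta_lt_1 r_def by (intro mult_pos_pos) auto
    moreover have "(1 - \<beta>) * (r - \<beta>) - \<beta> = 3 - 2 * r + (r - 1 - \<beta>) * (3 - \<beta>)"
      by (simp add: algebra_simps)
    ultimately show ?thesis using r_lt by linarith
  qed
  then have "\<beta> / (r * (1 - \<beta>)) \<le> (1 - \<beta>) * (r - \<beta>) / (r * (1 - \<beta>))"
    using r_pos beta_lt_1 by (intro divide_right_mono) auto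
  also have "\<dots> = 1 - \<beta> / r" using r_pos beta_lt_1 by (simp add: field_simps)
  finally show ?thesis using assms(3) unfolding r_def by linarith
qed

locale centred_newton_step =
  fixes N :: nat and x s u v :: "nat \<Rightarrow> real" and \<beta> \<eta> \<mu> :: real
  assumes N_ge_2: "2 \<le> N"
    and x_pos: "\<And>i. i < N \<Longrightarrow> 0 < x i"
    and s_pos: "\<And>i. i < N \<Longrightarrow> 0 < s i"
    and mu_eq: "\<mu> = (\<Sum>i<N. x i * s i) / real N"
    and centred: "(\<Sum>i<N. (x i * s i - \<mu>)^2) \<le> (\<beta> * \<mu>)^2"
    and beta_pos: "0 < \<beta>" and beta_lt: "\<beta> < sqrt 2 - 1"
    and eta_eq: "\<eta> = \<beta> / sqrt (real N)"
    and linearized: "\<And>i. i < N \<Longrightarrow> x i * v i + s i * u i = (1 - \<eta>) * \<mu> - x i * s i"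
    and uv_nonneg: "0 \<le> (\<Sum>i<N. u i * v i)"
begin

lemma beta_lt_1: "\<beta> < 1"
  using beta_lt sqrt_2_lt_three_halves by simp

lemma xs_pos: "i < N \<Longrightarrow> 0 < x i * s i"
  using x_pos s_pos by simp

lemma sum_xs: "(\<Sum>i<N. x i * s i) = real N * \<mu>"
  using mu_eq N_ge_2 by simp

lemma mu_pos: "0 < \<mu>"
proof -
  have "0 < (\<Sum>i<N. x i * s i)"
    using xs_pos N_ge_2 by (intro sum_pos) (auto simp: lessThan_empty_iff)
  then show ?thesis using sum_xs by (simp add: zero_less_mult_iff)
qed

lemma eta_le: "\<eta> \<le> \<beta> / sqrt 2"
  unfolding eta_eq using N_ge_2 beta_pos by (intro divide_left_mono) auto

lemma gamma_pos: "0 < 1 - \<eta>"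
proof -
  have "\<beta> / sqrt 2 \<le> \<beta>" using beta_pos by (simp add: divide_le_eq)
  then show ?thesis using eta_le beta_lt_1 by linarith
qed

lemma xs_lower_bound:
  assumes i: "i < N"
  shows "(1 - \<beta>) * \<mu> \<le> x i * s i"
proof -
  have "(x i * s i - \<mu>)^2 \<le> (\<beta> * \<mu>)^2"
    using member_le_sum[of i "{..<N}" "\<lambda>i. (x i * s i - \<mu>)^2"] i centred by auto
  then have "\<bar>x i * s i - \<mu>\<bar> \<le> \<bar>\<beta> * \<mu>\<bar>" using abs_le_square_iff by blast
  then have "\<mu> - x i * s i \<le> \<beta> * \<mu>" using beta_pos mu_pos by (simp add: abs_le_iff)
  then show ?thesis by (simp add: algebra_simps)
qed

lemma gap_sumsq: "(\<Sum>i<N. ((1 - \<eta>) * \<mu> - x i * s i)^2) \<le> 2 * (\<beta> * \<mu>)^2"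
proof -
  have cross: "(\<Sum>i<N. 2 * \<eta> * \<mu> * (\<mu> - x i * s i)) = 0"
    using sum_xs by (simp add: sum_distrib_left[symmetric] sum_subtractf)
  have eta_sq: "real N * \<eta>^2 = \<beta>^2" using N_ge_2 by (simp add: eta_eq power_divide)
  have "(\<Sum>i<N. ((1 - \<eta>) * \<mu> - x i * s i)^2)
      = (\<Sum>i<N. (x i * s i - \<mu>)^2 - 2 * \<eta> * \<mu> * (\<mu> - x i * s i) + \<eta>^2 * \<mu>^2)"
    by (intro sum.cong) (auto simp: power2_eq_square algebra_simps)
  also have "\<dots> = (\<Sum>i<N. (x i * s i - \<mu>)^2) - (\<Sum>i<N. 2 * \<eta> * \<mu> * (\<mu> - x i * s i))
                   + (real N * \<eta>^2) * \<mu>^2"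
    by (simp add: sum.distrib sum_subtractf)
  also have "\<dots> \<le> 2 * (\<beta> * \<mu>)^2" using centred by (simp add: cross eta_sq power_mult_distrib)
  finally show ?thesis .
qed

lemma weighted_gap_sumsq:
  "(\<Sum>i<N. ((1 - \<eta>) * \<mu> - x i * s i)^2 / (x i * s i)) \<le> 2 * \<beta>^2 * \<mu> / (1 - \<beta>)"
proof -
  have lb_pos: "0 < (1 - \<beta>) * \<mu>" using beta_lt_1 mu_pos by simp
  have "(\<Sum>i<N. ((1 - \<eta>) * \<mu> - x i * s i)^2 / (x i * s i))
      \<le> (\<Sum>i<N. ((1 - \<eta>) * \<mu> - x i * s i)^2 / ((1 - \<beta>) * \<mu>))"
    using xs_lower_bound xs_pos lb_pos by (intro sum_mono divide_left_mono) auto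
  also have "\<dots> = (\<Sum>i<N. ((1 - \<eta>) * \<mu> - x i * s i)^2) / ((1 - \<beta>) * \<mu>)"
    by (simp add: sum_divide_distrib)
  also have "\<dots> \<le> 2 * (\<beta> * \<mu>)^2 / ((1 - \<beta>) * \<mu>)"
    using gap_sumsq lb_pos by (intro divide_right_mono) auto
  also have "\<dots> = 2 * \<beta>^2 * \<mu> / (1 - \<beta>)"
    using mu_pos beta_lt_1 by (simp add: power2_eq_square field_simps)
  finally show ?thesis .
qed

text \<open>With \<open>P = u s\<close> and \<open>R = v x\<close> one has \<open>P + R = (1 - \<eta>) \<mu> - x s\<close> and \<open>P R = u v (x s)\<close>.\<close>

lemma scaled_parts:
  assumes i: "i < N"
  shows "((u i * s i)^2 + (v i * x i)^2) / (x i * s i)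
           = ((1 - \<eta>) * \<mu> - x i * s i)^2 / (x i * s i) - 2 * (u i * v i)"
    and "u i * v i \<le> ((1 - \<eta>) * \<mu> - x i * s i)^2 / (4 * (x i * s i))"
proof -
  have sum_eq: "(1 - \<eta>) * \<mu> - x i * s i = u i * s i + v i * x i"
    using linearized[OF i] by (simp add: algebra_simps)
  have m_pos: "0 < x i * s i" using xs_pos[OF i] .
  have expand: "(u i * s i)^2 + (v i * x i)^2 = (u i * s i + v i * x i)^2 - 2 * (u i * v i) * (x i * s i)"
    by (simp add: power2_eq_square algebra_simps)
  show "((u i * s i)^2 + (v i * x i)^2) / (x i * s i)
           = ((1 - \<eta>) * \<mu> - x i * s i)^2 / (x i * s i) - 2 * (u i * v i)"
    unfolding sum_eq expand using x_pos[OF i] s_pos[OF i] by (simp add: diff_divide_distrib)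
  have "4 * (u i * s i) * (v i * x i) \<le> (u i * s i + v i * x i)^2"
    using sum_squares_ge_zero[of "u i * s i - v i * x i" 0] by (simp add: power2_eq_square algebra_simps)
  then show "u i * v i \<le> ((1 - \<eta>) * \<mu> - x i * s i)^2 / (4 * (x i * s i))"
    using m_pos unfolding sum_eq by (simp add: field_simps)
qed

lemma scaled_sumsq:
  "(\<Sum>i<N. ((u i * s i)^2 + (v i * x i)^2) / (x i * s i)) \<le> 2 * \<beta>^2 * \<mu> / (1 - \<beta>)"
proof -
  have "(\<Sum>i<N. ((u i * s i)^2 + (v i * x i)^2) / (x i * s i))
      = (\<Sum>i<N. ((1 - \<eta>) * \<mu> - x i * s i)^2 / (x i * s i)) - 2 * (\<Sum>i<N. u i * v i)"
    by (simp add: scaled_parts(1) sum_subtractf sum_distrib_left)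
  then show ?thesis using weighted_gap_sumsq uv_nonneg by linarith
qed

lemma x_plus_u_pos:
  assumes i: "i < N"
  shows "0 < x i + u i"
proof -
  define G where "G = 2 * \<beta>^2 * \<mu> / (1 - \<beta>)"
  have "(u i * s i)^2 / (x i * s i) \<le> ((u i * s i)^2 + (v i * x i)^2) / (x i * s i)"
    using xs_pos[OF i] by (intro divide_right_mono) auto
  also have "\<dots> \<le> (\<Sum>i<N. ((u i * s i)^2 + (v i * x i)^2) / (x i * s i))"
    using i xs_pos by (intro member_le_sum) (auto intro!: divide_nonneg_pos)
  finally have "(u i * s i)^2 / (x i * s i) \<le> G" using scaled_sumsq unfolding G_def by linarith
  then have "(u i)^2 * s i \<le> G * x i"
    using x_pos[OF i] s_pos[OF i] by (simp add: divide_le_eq power2_eq_square algebra_simps)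
  then have "(u i)^2 * (x i * s i) \<le> G * (x i)^2"
    using x_pos[OF i] by (simp add: mult_right_mono power2_eq_square algebra_simps)
  moreover have "(u i)^2 * ((1 - \<beta>) * \<mu>) \<le> (u i)^2 * (x i * s i)"
    using xs_lower_bound[OF i] by (intro mult_left_mono) auto
  ultimately have "(u i)^2 * ((1 - \<beta>) * \<mu>) \<le> G * (x i)^2" by linarith
  then have "\<mu> * ((u i)^2 * (1 - \<beta>)^2) \<le> \<mu> * (2 * \<beta>^2 * (x i)^2)"
    using beta_lt_1 unfolding G_def by (simp add: field_simps power2_eq_square)
  then have "(u i)^2 * (1 - \<beta>)^2 \<le> 2 * \<beta>^2 * (x i)^2" using mu_pos by simp
  also have "\<dots> < (1 - \<beta>)^2 * (x i)^2"
    using small_beta_power2[OF beta_pos beta_lt] x_pos[OF i] by (intro mult_strict_right_mono) auto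
  finally have "(u i)^2 < (x i)^2" using beta_lt_1 by (simp add: mult.commute)
  then have "\<bar>u i\<bar> < \<bar>x i\<bar>" using abs_le_square_iff[of "x i" "u i"] by linarith
  then show ?thesis using x_pos[OF i] by auto
qed

lemma sum_product_deviation:
  assumes "k < N"
  shows "(\<Sum>i<N. u i * v i - (if i = k then \<Sum>j<N. u j * v j else 0)) = 0"
  using assms by (simp add: sum_subtractf)

lemma product_deviation_sumsq:
  assumes k: "k < N"
  shows "(\<Sum>i<N. (u i * v i - (if i = k then \<Sum>j<N. u j * v j else 0))^2) \<le> (\<beta> * ((1 - \<eta>) * \<mu>))^2"
proof -
  define c where "c i = ((1 - \<eta>) * \<mu> - x i * s i)^2 / (4 * (x i * s i))" for i
  have c_nonneg: "0 \<le> c i" if "i < N" for i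
    using xs_pos[OF that] unfolding c_def by (intro divide_nonneg_pos) auto
  have sum_c: "(\<Sum>i<N. c i) \<le> \<beta>^2 * \<mu> / (2 * (1 - \<beta>))"
  proof -
    have "(\<Sum>i<N. c i) = (\<Sum>i<N. ((1 - \<eta>) * \<mu> - x i * s i)^2 / (x i * s i)) / 4"
      unfolding c_def by (simp add: sum_divide_distrib field_simps)
    also have "\<dots> \<le> (2 * \<beta>^2 * \<mu> / (1 - \<beta>)) / 4"
      using weighted_gap_sumsq by (intro divide_right_mono) auto
    also have "\<dots> = \<beta>^2 * \<mu> / (2 * (1 - \<beta>))" using beta_lt_1 by (simp add: field_simps)
    finally show ?thesis .
  qed
  have "(\<Sum>i<N. (u i * v i - (if i = k then \<Sum>j<N. u j * v j else 0))^2) \<le> 2 * (\<Sum>i<N. c i)^2"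
  proof (rule sum_power2_le_of_sum_eq_0)
    show "u i * v i - (if i = k then \<Sum>j<N. u j * v j else 0) \<le> c i" if "i \<in> {..<N}" for i
      using scaled_parts(2)[of i] uv_nonneg that unfolding c_def by auto
  qed (use sum_product_deviation[OF k] c_nonneg in auto)
  also have "\<dots> \<le> 2 * (\<beta>^2 * \<mu> / (2 * (1 - \<beta>)))^2"
    using sum_c c_nonneg by (intro mult_left_mono power_mono sum_nonneg) auto
  also have "\<dots> = (\<beta> * \<mu>)^2 * (\<beta> / (sqrt 2 * (1 - \<beta>)))^2"
  proof -
    have "(\<beta> / (sqrt 2 * (1 - \<beta>)))^2 = \<beta>^2 / (2 * (1 - \<beta>)^2)"
      by (simp add: power_divide power_mult_distrib)
    moreover have "2 * (\<beta>^2 * \<mu> / (2 * d))^2 = (\<beta> * \<mu>)^2 * (\<beta>^2 / (2 * d^2))" if "0 < d" for d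
      using that by (simp add: field_simps power2_eq_square)
    ultimately show ?thesis using beta_lt_1 by (metis diff_gt_0_iff_gt)
  qed
  also have "\<dots> \<le> (\<beta> * \<mu>)^2 * (1 - \<eta>)^2"
    using small_beta_step[OF beta_pos beta_lt eta_le] beta_pos beta_lt_1
    by (intro mult_left_mono power_mono) auto
  also have "\<dots> = (\<beta> * ((1 - \<eta>) * \<mu>))^2" by (simp add: power2_eq_square)
  finally show ?thesis .
qed

end

section \<open>The homogeneous map \<open>\<psi>\<close> and its Jacobian\<close>

lemma dotp_commute: "dotp n x y = dotp n y x"
  by (simp add: dotp_def mult.commute)

lemma dotp_diff_right: "dotp n x (\<lambda>i. y i - z i) = dotp n x y - dotp n x z"
  by (simp add: dotp_def algebra_simps sum_subtractf)

lemma dotp_add_left: "dotp n (\<lambda>i. x i + y i) z = dotp n x z + dotp n y z"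
  by (simp add: dotp_def algebra_simps sum.distrib)

lemma dotp_Suc: "dotp (Suc n) x y = dotp n x y + x n * y n"
  by (simp add: dotp_def)

lemma matvec_Suc: "matvec (Suc n) B x i = (\<Sum>j<n. B i j * x j) + B i n * x n"
  by (simp add: matvec_def)

abbreviation bilin :: "nat \<Rightarrow> (nat \<Rightarrow> nat \<Rightarrow> real) \<Rightarrow> (nat \<Rightarrow> real) \<Rightarrow> (nat \<Rightarrow> real) \<Rightarrow> real" where
  "bilin n M u v \<equiv> dotp n u (matvec n M v)"

lemma bilin_eq_double_sum: "bilin n M u v = (\<Sum>i<n. \<Sum>j<n. u i * M i j * v j)"
  by (simp add: dotp_def matvec_def sum_distrib_left mult.assoc)

lemma bilin_add:
  "bilin n M (\<lambda>i. u i + v i) (\<lambda>i. u i + v i) = bilin n M u u + bilin n M u v + bilin n M v u + bilin n M v v"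
  unfolding bilin_eq_double_sum by (simp add: algebra_simps sum.distrib)

lemma bilin_diff_scaled:
  "bilin n M (\<lambda>i. u i - t * v i) (\<lambda>i. u i - t * v i)
     = bilin n M u u - t * bilin n M u v - t * bilin n M v u + t^2 * bilin n M v v"
  unfolding bilin_eq_double_sum
  by (simp add: algebra_simps power2_eq_square sum.distrib sum_subtractf sum_distrib_left)

lemma sum_symmetrized_row:
  "(\<Sum>j<n. (\<Sum>l<n. x l * (M l j + M j l)) * d j) = bilin n M x d + bilin n M d x"
proof -
  have "(\<Sum>j<n. (\<Sum>l<n. x l * (M l j + M j l)) * d j)
      = (\<Sum>j<n. \<Sum>l<n. x l * M l j * d j + d j * M j l * x l)"
    by (intro sum.cong refl) (simp add: sum_distrib_left sum_distrib_right algebra_simps)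
  also have "\<dots> = (\<Sum>j<n. \<Sum>l<n. x l * M l j * d j) + (\<Sum>j<n. \<Sum>l<n. d j * M j l * x l)"
    by (simp add: sum.distrib)
  also have "(\<Sum>j<n. \<Sum>l<n. x l * M l j * d j) = bilin n M x d"
    unfolding bilin_eq_double_sum by (rule sum.swap)
  finally show ?thesis by (simp add: bilin_eq_double_sum)
qed

lemma matvec_jac_less:
  assumes "i < n"
  shows "matvec (n+1) (jac n M q x) d i = matvec n M d i + q i * d n"
  using assms by (simp add: matvec_Suc matvec_def jac_def)

lemma matvec_jac_last:
  "matvec (n+1) (jac n M q x) d n
     = - (bilin n M x d + bilin n M d x) / x n - dotp n q d + bilin n M x x / (x n)^2 * d n"
proof -
  have "(\<Sum>j<n. jac n M q x n j * d j) = (\<Sum>j<n. - ((\<Sum>l<n. x l * (M l j + M j l)) * d j) / x n - q j * d j)"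
    by (intro sum.cong refl) (simp add: jac_def left_diff_distrib)
  also have "\<dots> = - (\<Sum>j<n. (\<Sum>l<n. x l * (M l j + M j l)) * d j) / x n - dotp n q d"
    by (simp only: sum_subtractf sum_divide_distrib[symmetric] sum_negf dotp_def)
  finally show ?thesis by (simp add: matvec_Suc sum_symmetrized_row jac_def)
qed

lemma dotp_matvec_jac:
  "dotp (n+1) u (matvec (n+1) (jac n M q x) d)
     = bilin n M u d + d n * dotp n u q + u n * matvec (n+1) (jac n M q x) d n"
proof -
  have "(\<Sum>i<n. u i * matvec (n+1) (jac n M q x) d i) = (\<Sum>i<n. u i * (matvec n M d i + q i * d n))"
    by (intro sum.cong refl) (metis lessThan_iff matvec_jac_less)
  then show ?thesis
    by (simp add: dotp_Suc dotp_def algebra_simps sum.distrib sum_distrib_left)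
qed

lemma dotp_psi_self:
  assumes "x n \<noteq> 0"
  shows "dotp (n+1) x (psi n M q x) = 0"
proof -
  have "(\<Sum>i<n. x i * psi n M q x i) = (\<Sum>i<n. x i * (matvec n M x i + q i * x n))"
    by (intro sum.cong) (simp_all add: psi_def)
  also have "\<dots> = bilin n M x x + x n * dotp n x q"
    by (simp add: dotp_def algebra_simps sum.distrib sum_distrib_left)
  finally show ?thesis using assms by (simp add: dotp_Suc dotp_def psi_def field_simps)
qed

lemma dotp_jac_self:
  assumes "x n \<noteq> 0"
  shows "dotp (n+1) x (matvec (n+1) (jac n M q x) d) = - dotp (n+1) (psi n M q x) d"
proof -
  have "(\<Sum>i<n. psi n M q x i * d i) = (\<Sum>i<n. d i * (matvec n M x i + q i * x n))"
    by (intro sum.cong) (simp_all add: psi_def mult.commute)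
  also have "\<dots> = bilin n M d x + x n * dotp n d q"
    by (simp add: dotp_def algebra_simps sum.distrib sum_distrib_left)
  finally have psi_d: "dotp (n+1) (psi n M q x) d = bilin n M d x + x n * dotp n d q + psi n M q x n * d n"
    by (simp add: dotp_Suc dotp_def)
  show ?thesis
    using assms unfolding psi_d dotp_matvec_jac matvec_jac_last
    by (simp add: dotp_commute[of n q] psi_def field_simps power2_eq_square)
qed

lemma dotp_jac_quadratic:
  assumes "x n \<noteq> 0"
  shows "dotp (n+1) d (matvec (n+1) (jac n M q x) d)
           = bilin n M (\<lambda>i. d i - d n / x n * x i) (\<lambda>i. d i - d n / x n * x i)"
  using assms unfolding dotp_matvec_jac matvec_jac_last bilin_diff_scaled
  by (simp add: dotp_commute[of n q] field_simps power2_eq_square)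

lemma psi_add_less:
  assumes "i < n"
  shows "psi n M q (\<lambda>i. x i + d i) i = psi n M q x i + matvec (n+1) (jac n M q x) d i"
proof -
  have "matvec n M (\<lambda>i. x i + d i) i = matvec n M x i + matvec n M d i"
    by (simp add: matvec_def algebra_simps sum.distrib)
  then show ?thesis using assms matvec_jac_less[OF assms, of M q x d] by (simp add: psi_def algebra_simps)
qed

lemma psi_add_last:
  assumes "0 < x n" and "0 < x n + d n"
  shows "(x n + d n) * (psi n M q (\<lambda>i. x i + d i) n - psi n M q x n - matvec (n+1) (jac n M q x) d n)
           = - dotp (n+1) d (matvec (n+1) (jac n M q x) d)"
proof -
  have psi_plus: "psi n M q (\<lambda>i. x i + d i) n
      = - (bilin n M x x + bilin n M x d + bilin n M d x + bilin n M d d) / (x n + d n)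
        - (dotp n x q + dotp n d q)"
    unfolding psi_def by (simp only: bilin_add) (simp add: dotp_add_left)
  have psi_x: "psi n M q x n = - bilin n M x x / x n - dotp n x q"
    by (simp add: psi_def)
  have "(\<tau> + \<delta>) * ((- (a + b1 + b2 + c) / (\<tau> + \<delta>) - (p + p')) - (- a / \<tau> - p)
                         - (- (b1 + b2) / \<tau> - p' + a / \<tau>^2 * \<delta>))
        = - (c + \<delta> * p' + \<delta> * (- (b1 + b2) / \<tau> - p' + a / \<tau>^2 * \<delta>))"
    if "0 < \<tau>" and "0 < \<tau> + \<delta>" for a b1 b2 c p p' \<tau> \<delta> :: real
  proof -
    have "(\<tau> + \<delta>) * ((- (a + b1 + b2 + c) / (\<tau> + \<delta>) - (p + p')) - (- a / \<tau> - p)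
                         - (- (b1 + b2) / \<tau> - p' + a / \<tau>^2 * \<delta>))
        = (\<tau> + \<delta>) * (- (a + b1 + b2 + c) / (\<tau> + \<delta>))
          - (\<tau> + \<delta>) * ((p + p') + (- a / \<tau> - p) + (- (b1 + b2) / \<tau> - p' + a / \<tau>^2 * \<delta>))"
      by (simp add: algebra_simps)
    also have "(\<tau> + \<delta>) * (- (a + b1 + b2 + c) / (\<tau> + \<delta>)) = - (a + b1 + b2 + c)"
      using that by simp
    also have "- (a + b1 + b2 + c)
          - (\<tau> + \<delta>) * ((p + p') + (- a / \<tau> - p) + (- (b1 + b2) / \<tau> - p' + a / \<tau>^2 * \<delta>))
        = - (c + \<delta> * p' + \<delta> * (- (b1 + b2) / \<tau> - p' + a / \<tau>^2 * \<delta>))"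
      using that by (simp add: field_simps power2_eq_square)
    finally show ?thesis .
  qed
  from this[OF assms, of "bilin n M x x" "bilin n M x d" "bilin n M d x" "bilin n M d d" "dotp n x q" "dotp n d q"]
  show ?thesis
    unfolding psi_plus psi_x dotp_matvec_jac[of n d] matvec_jac_last
    by (simp add: dotp_commute[of n q])
qed

lemma sum_lessThan_if_less:
  fixes f :: "nat \<Rightarrow> 'a::comm_monoid_add"
  assumes "m \<le> n"
  shows "(\<Sum>i<n. if i < m then f i else 0) = (\<Sum>i<m. f i)"
proof -
  have "(\<Sum>i<n. if i < m then f i else 0) = sum f ({..<n} \<inter> {i. i < m})"
    by (simp add: sum.inter_restrict)
  also have "{..<n} \<inter> {i. i < m} = {..<m}" using assms by auto
  finally show ?thesis .
qed

lemma Mmat_quadratic_nonneg: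
  assumes Q_psd: "\<And>z. 0 \<le> (\<Sum>i<nz. \<Sum>j<nz. z i * Q i j * z j)"
  shows "0 \<le> bilin (nz + nb) (Mmat nz Q A) y y"
proof -
  define n where "n = nz + nb"
  define M where "M = Mmat nz Q A"
  have sym_part: "y i * (M i j + M j i) * y j
      = (if i < nz then if j < nz then y i * (Q i j + Q j i) * y j else 0 else 0)" for i j
    unfolding M_def Mmat_def by auto
  have "(\<Sum>i<n. \<Sum>j<n. y i * M j i * y j) = (\<Sum>i<n. \<Sum>j<n. y i * M i j * y j)"
    by (subst sum.swap) (simp add: algebra_simps)
  then have "2 * bilin n M y y = (\<Sum>i<n. \<Sum>j<n. y i * M i j * y j) + (\<Sum>i<n. \<Sum>j<n. y i * M j i * y j)"
    unfolding bilin_eq_double_sum by simp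
  also have "\<dots> = (\<Sum>i<n. \<Sum>j<n. y i * (M i j + M j i) * y j)"
    by (simp add: sum.distrib[symmetric] algebra_simps)
  also have "\<dots> = (\<Sum>i<n. if i < nz then \<Sum>j<n. if j < nz then y i * (Q i j + Q j i) * y j else 0 else 0)"
    by (intro sum.cong refl) (simp add: sym_part)
  also have "\<dots> = (\<Sum>i<nz. \<Sum>j<nz. y i * Q i j * y j) + (\<Sum>i<nz. \<Sum>j<nz. y i * Q j i * y j)"
    unfolding n_def by (simp add: sum_lessThan_if_less algebra_simps sum.distrib)
  also have "(\<Sum>i<nz. \<Sum>j<nz. y i * Q j i * y j) = (\<Sum>i<nz. \<Sum>j<nz. y i * Q i j * y j)"
    by (subst sum.swap) (simp add: algebra_simps)
  finally have "bilin n M y y = (\<Sum>i<nz. \<Sum>j<nz. y i * Q i j * y j)" by simp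
  then show ?thesis using Q_psd unfolding n_def M_def by simp
qed

lemma jac_quadratic_nonneg:
  assumes "\<And>z. 0 \<le> (\<Sum>i<nz. \<Sum>j<nz. z i * Q i j * z j)" and "x (nz + nb) \<noteq> 0"
  shows "0 \<le> dotp (nz + nb + 1) d (matvec (nz + nb + 1) (jac (nz + nb) (Mmat nz Q A) q x) d)"
  unfolding dotp_jac_quadratic[where x=x and n="nz + nb", OF assms(2)] using Mmat_quadratic_nonneg[OF assms(1)] .

section \<open>The Newton step\<close>

lemma newton_step_inner:
  assumes tau: "x n \<noteq> 0" and newton: "newton_sys n M q \<eta> (1 - \<eta>) x s dx ds"
  shows "dotp (n+1) dx ds = dotp (n+1) dx (matvec (n+1) (jac n M q x) dx)"
proof -
  define Jdx where "Jdx = matvec (n+1) (jac n M q x) dx"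
  define r where "r i = s i - psi n M q x i" for i
  define \<mu> where "\<mu> = mubar n x s"
  have dotp_ds: "dotp (n+1) y ds = dotp (n+1) y Jdx - \<eta> * dotp (n+1) y r" for y
  proof -
    have ds_eq: "ds i = Jdx i - \<eta> * r i" if "i < n+1" for i
      using newton that unfolding newton_sys_def Jdx_def r_def by (simp add: algebra_simps)
    have "dotp (n+1) y ds = (\<Sum>i<n+1. y i * Jdx i - \<eta> * (y i * r i))"
      unfolding dotp_def by (intro sum.cong refl) (simp add: ds_eq right_diff_distrib)
    then show ?thesis unfolding dotp_def by (simp only: sum_subtractf sum_distrib_left)
  qed
  have "dotp (n+1) x ds + dotp (n+1) s dx = (\<Sum>i<n+1. (1 - \<eta>) * \<mu> - x i * s i)"
    unfolding dotp_def sum.distrib[symmetric] using newton unfolding newton_sys_def \<mu>_def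
    by (intro sum.cong) (auto simp: mult.commute)
  also have "\<dots> = real (n+1) * ((1 - \<eta>) * \<mu>) - real (n+1) * \<mu>"
    unfolding \<mu>_def mubar_def by (simp add: sum_subtractf dotp_def)
  finally have sum_compl: "dotp (n+1) x ds + dotp (n+1) s dx = - \<eta> * (real (n+1) * \<mu>)"
    by (simp add: algebra_simps)
  have "dotp (n+1) x r = real (n+1) * \<mu>"
    using dotp_psi_self[where x=x and n=n, OF tau] unfolding r_def dotp_diff_right \<mu>_def mubar_def by simp
  moreover have "dotp (n+1) x Jdx = - dotp (n+1) (psi n M q x) dx"
    unfolding Jdx_def using dotp_jac_self[where x=x and n=n, OF tau] .
  ultimately have "dotp (n+1) dx r = 0"
    using sum_compl unfolding dotp_ds r_def dotp_diff_right by (simp add: dotp_commute)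
  then show ?thesis unfolding dotp_ds Jdx_def by simp
qed

lemma newton_step_products:
  assumes tau: "0 < x n" and tau_plus: "0 < x n + dx n"
    and newton: "newton_sys n M q \<eta> (1 - \<eta>) x s dx ds" and i: "i < n+1"
  shows "(x i + dx i) * (psi n M q (\<lambda>i. x i + dx i) i + (1 - \<eta>) * (s i - psi n M q x i))
           = (1 - \<eta>) * mubar n x s + dx i * ds i - (if i = n then dotp (n+1) dx ds else 0)"
proof -
  define xp where "xp i = x i + dx i" for i
  define Jdx where "Jdx = matvec (n+1) (jac n M q x) dx"
  define err where "err = psi n M q xp i - psi n M q x i - Jdx i"
  have ds: "ds i = Jdx i - \<eta> * (s i - psi n M q x i)"
    using newton i unfolding newton_sys_def Jdx_def by (simp add: algebra_simps)
  have compl: "x i * ds i + s i * dx i = (1 - \<eta>) * mubar n x s - x i * s i"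
    using newton i unfolding newton_sys_def by simp
  have xp_err: "xp i * err = - (if i = n then dotp (n+1) dx ds else 0)"
  proof (cases "i = n")
    case True
    then show ?thesis
      using psi_add_last[where x=x and n=n and d=dx, OF tau tau_plus] newton_step_inner[OF _ newton] tau
      unfolding xp_def err_def Jdx_def by simp
  next
    case False
    then show ?thesis
      using psi_add_less[of i n] i unfolding xp_def err_def Jdx_def by simp
  qed
  have "psi n M q xp i + (1 - \<eta>) * (s i - psi n M q x i) = s i + ds i + err"
    unfolding ds err_def by (simp add: algebra_simps)
  then have "xp i * (psi n M q xp i + (1 - \<eta>) * (s i - psi n M q x i))
      = (x i * ds i + s i * dx i) + x i * s i + dx i * ds i + xp i * err"
    unfolding xp_def by (simp add: algebra_simps)
  then show ?thesis unfolding compl xp_err by (simp add: xp_def[abs_def])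
qed

lemma neighbourhood_of_products:
  fixes \<beta> \<nu> :: real
  assumes beta: "0 \<le> \<beta>" "\<beta> < 1" and nu_pos: "0 < \<nu>"
    and x_pos: "\<forall>i<n+1. 0 < x i"
    and prod: "\<And>i. i < n+1 \<Longrightarrow> x i * s i = \<nu> + b i"
    and sum_b: "(\<Sum>i<n+1. b i) = 0"
    and sumsq_b: "(\<Sum>i<n+1. (b i)^2) \<le> (\<beta> * \<nu>)^2"
  shows "centdev n x s \<le> \<beta> * mubar n x s" and "\<forall>i<n+1. 0 < s i"
proof -
  have "mubar n x s = (\<Sum>i<n+1. \<nu> + b i) / real (n+1)"
    unfolding mubar_def dotp_def using prod by (intro arg_cong2[where f="(/)"] sum.cong) auto
  then have mu: "mubar n x s = \<nu>" using sum_b by (simp add: sum.distrib)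
  have "(\<Sum>i<n+1. (x i * s i - mubar n x s)^2) = (\<Sum>i<n+1. (b i)^2)"
    unfolding mu using prod by (intro sum.cong) auto
  then show "centdev n x s \<le> \<beta> * mubar n x s"
    unfolding centdev_def mu using sumsq_b beta nu_pos by (intro real_le_lsqrt) auto
  show "\<forall>i<n+1. 0 < s i"
  proof (intro allI impI)
    fix i assume i: "i < n+1"
    have "(b i)^2 \<le> (\<beta> * \<nu>)^2"
      using member_le_sum[of i "{..<n+1}" "\<lambda>i. (b i)^2"] i sumsq_b by auto
    then have "\<bar>b i\<bar> \<le> \<beta> * \<nu>" using beta nu_pos abs_le_square_iff[of "b i" "\<beta> * \<nu>"] by simp
    moreover have "\<beta> * \<nu> < \<nu>" using beta nu_pos by simp
    ultimately have "0 < x i * s i" using prod[OF i] by linarith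
    then show "0 < s i" using x_pos i zero_less_mult_pos by blast
  qed
qed

theorem mainTheorem8:
  fixes nz nb :: nat
    and Q A :: "nat \<Rightarrow> nat \<Rightarrow> real"
    and c b :: "nat \<Rightarrow> real"
    and x s dx ds :: "nat \<Rightarrow> real"
    and \<beta> :: real
  defines "n \<equiv> nz + nb"
    and "M \<equiv> Mmat nz Q A"
    and "q \<equiv> qvec nz c b"
    and "\<eta> \<equiv> \<beta> / sqrt (real (nz + nb + 1))"
  assumes Q_sym: "\<forall>i<nz. \<forall>j<nz. Q i j = Q j i"
    and Q_psd: "\<forall>z. 0 \<le> (\<Sum>i<nz. \<Sum>j<nz. z i * Q i j * z j)"
    and n_pos: "1 \<le> n"
    and x_pos: "\<forall>i<n+1. 0 < x i"
    and s_pos: "\<forall>i<n+1. 0 < s i"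
    and beta_pos: "0 < \<beta>" and beta_lt: "\<beta> < sqrt 2 - 1"
    and nbhd: "centdev n x s \<le> \<beta> * mubar n x s"
    and newton: "newton_sys n M q \<eta> (1 - \<eta>) x s dx ds"
  shows "let xp = (\<lambda>i. x i + dx i);
             sp = (\<lambda>i. psi n M q xp i + (1 - \<eta>) * (s i - psi n M q x i))
         in (\<forall>i<n+1. 0 < xp i) \<and>
            centdev n xp sp \<le> \<beta> * mubar n xp sp \<and>
            (\<forall>i<n+1. 0 < sp i)"
proof -
  define xp where "xp = (\<lambda>i. x i + dx i)"
  define sp where "sp = (\<lambda>i. psi n M q xp i + (1 - \<eta>) * (s i - psi n M q x i))"
  have tau: "0 < x n" using x_pos by simp
  have inner: "dotp (n+1) dx ds = dotp (n+1) dx (matvec (n+1) (jac n M q x) dx)"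
    using newton_step_inner[where x=x and n=n, OF _ newton] tau by simp
  interpret centred_newton_step "n+1" x s dx ds \<beta> \<eta> "mubar n x s"
  proof
    show "(\<Sum>i<n+1. (x i * s i - mubar n x s)^2) \<le> (\<beta> * mubar n x s)^2"
      using nbhd unfolding centdev_def by (rule sqrt_le_D)
    show "0 \<le> (\<Sum>i<n+1. dx i * ds i)"
      using inner jac_quadratic_nonneg[where nz=nz and Q=Q and x=x and nb=nb and d=dx and A=A and q=q] Q_psd tau
      unfolding n_def M_def dotp_def by simp
  qed (use n_pos x_pos s_pos beta_pos beta_lt newton in
        \<open>auto simp: mubar_def dotp_def \<eta>_def n_def newton_sys_def\<close>)
  have xp_pos: "\<forall>i<n+1. 0 < xp i" using x_plus_u_pos xp_def by simp
  define dev where "dev i = dx i * ds i - (if i = n then \<Sum>j<n+1. dx j * ds j else 0)" for i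
  have prod: "xp i * sp i = (1 - \<eta>) * mubar n x s + dev i" if "i < n+1" for i
    using newton_step_products[OF tau _ newton that] xp_pos
    unfolding xp_def sp_def dev_def dotp_def by simp
  have sum_dev: "(\<Sum>i<n+1. dev i) = 0"
    unfolding dev_def by (rule sum_product_deviation) simp
  have sumsq_dev: "(\<Sum>i<n+1. (dev i)^2) \<le> (\<beta> * ((1 - \<eta>) * mubar n x s))^2"
    unfolding dev_def by (rule product_deviation_sumsq) simp
  from neighbourhood_of_products[OF less_imp_le[OF beta_pos] beta_lt_1
      mult_pos_pos[OF gamma_pos mu_pos] xp_pos prod sum_dev sumsq_dev] xp_pos
  show ?thesis unfolding Let_def xp_def sp_def by blast
qed

end
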